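(* Let $\boldsymbol{\lambda}\in\Delta_N$, $\boldsymbol{\nu}=(\nu_1,\dots,\nu_N)\in\mathcal{P}_1(\mathbb{R})^N$ and $\nu\in\mathcal{P}_1(\mathbb{R})$. The following are equivalent: (1) $\nu\in\mathrm{Med}_{\boldsymbol{\lambda}}(\boldsymbol{\nu})$; (2) $F_\nu(x)\in\mathrm{M}_{\boldsymbol{\lambda}}(F_{\nu_1}(x),\dots,F_{\nu_N}(x))$ for all $x\in\mathbb{R}$; (3) $Q_\nu(t)\in\mathrm{M}_{\boldsymbol{\lambda}}(Q_{\nu_1}(t),\dots,Q_{\nu_N}(t))$ for all $t\in(0,1)$. In particular, if there is no subset $I\subset\{1,\dots,N\}$ with $\sum_{i\in I}\lambda_i=\frac12$, there exists a unique Wasserstein median.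
   Context: $\Delta_N$ is the unit simplex of $\mathbb{R}^N$; $\mathcal{P}_1(\mathbb{R})$ is the set of Borel probability measures on $\mathbb{R}$ with finite first moment, with distance $W_1$. $\mathrm{Med}_{\boldsymbol{\lambda}}(\boldsymbol{\nu})$ is the set of minimizers over $\mu\in\mathcal{P}_1(\mathbb{R})$ of $\sum_i\lambda_iW_1(\nu_i,\mu)$ (Wasserstein medians). $F_\nu(x)=\nu((-\infty,x])$ is the cdf and $Q_\nu(t)=\inf\{x:F_\nu(x)\ge t\}$ the quantile function. For $\mathbf{x}=(x_1,\dots,x_N)\in\mathbb{R}^N$, $\mathrm{M}_{\boldsymbol{\lambda}}(\mathbf{x})=\operatorname{argmin}_{y\in\mathbb{R}}\sum_{i=1}^N\lambda_i|y-x_i|$ (the set of weighted medians). *)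

theory Defs
  imports "HOL-Probability.Probability"
begin

definition unit_simplex :: "nat \<Rightarrow> (nat \<Rightarrow> real) \<Rightarrow> bool" where
  "unit_simplex N lam \<longleftrightarrow> (\<forall>i<N. 0 \<le> lam i) \<and> (\<Sum>i<N. lam i) = 1"

definition P1 :: "real measure \<Rightarrow> bool" where
  "P1 M \<longleftrightarrow> prob_space M \<and> sets M = sets borel \<and> integrable M (\<lambda>x. \<bar>x\<bar>)"

definition couplings :: "real measure \<Rightarrow> real measure \<Rightarrow> (real \<times> real) measure set" where
  "couplings mu nu = {pi. prob_space pi \<and> sets pi = sets (borel \<Otimes>\<^sub>M borel)
      \<and> distr pi borel fst = mu \<and> distr pi borel snd = nu}"

definition W1 :: "real measure \<Rightarrow> real measure \<Rightarrow> real" where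
  "W1 mu nu = enn2real (\<Sqinter>pi\<in>couplings mu nu. \<integral>\<^sup>+ p. ennreal \<bar>fst p - snd p\<bar> \<partial>pi)"

definition WMed :: "nat \<Rightarrow> (nat \<Rightarrow> real) \<Rightarrow> (nat \<Rightarrow> real measure) \<Rightarrow> real measure set" where
  "WMed N lam nus = {mu. P1 mu \<and> (\<forall>mu'. P1 mu' \<longrightarrow>
      (\<Sum>i<N. lam i * W1 (nus i) mu) \<le> (\<Sum>i<N. lam i * W1 (nus i) mu'))}"

definition quantile :: "real measure \<Rightarrow> real \<Rightarrow> real" where
  "quantile M t = Inf {x. t \<le> cdf M x}"

definition wmedian :: "nat \<Rightarrow> (nat \<Rightarrow> real) \<Rightarrow> (nat \<Rightarrow> real) \<Rightarrow> real set" where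
  "wmedian N lam x = {y. \<forall>z. (\<Sum>i<N. lam i * \<bar>y - x i\<bar>) \<le> (\<Sum>i<N. lam i * \<bar>z - x i\<bar>)}"

end

theory Submission
  imports Defs
begin

text \<open>
  On the real line the comonotone coupling, given by the two quantile functions, is optimal, and
  its cost is the area between the two cdfs; so \<open>W\<^sub>1(\<nu>\<^sub>i, \<mu>)\<close> is both the \<open>L\<^sup>1\<close> distance of the
  cdfs and that of the quantile functions. The median objective thus becomes an integral, over
  \<open>x\<close> resp. \<open>t\<close>, of the weighted-median cost of the numbers \<open>F\<^sub>\<nu>\<^sub>i(x)\<close> resp. \<open>Q\<^sub>\<nu>\<^sub>i(t)\<close>.
  The measure whose quantile function is the upper weighted median of the \<open>Q\<^sub>\<nu>\<^sub>i\<close> has, by the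
  Galois connection between quantile functions and cdfs, the lower weighted median of the
  \<open>F\<^sub>\<nu>\<^sub>i\<close> as its cdf, so it minimises both integrands pointwise. Hence \<open>\<nu>\<close> is a Wasserstein
  median iff its cdf (quantile function) is a weighted median almost everywhere, and one-sided
  continuity upgrades this to everywhere. A weighted median \<open>y\<close> is characterised by both
  \<open>{i. x\<^sub>i \<le> y}\<close> and \<open>{i. y \<le> x\<^sub>i}\<close> having weight at least \<open>1/2\<close>, so it is unique unless some
  index set has weight exactly \<open>1/2\<close>; then the cdf, hence the Wasserstein median, is unique.
\<close>

section \<open>Quantile functions\<close>

lemma quantile_le_iff:
  assumes "real_distribution M" "0 < t" "t < 1"
  shows "quantile M t \<le> x \<longleftrightarrow> t \<le> cdf M x"
proof -
  interpret cdf_distribution M by (simp add: cdf_distribution_def assms)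
  show ?thesis using pseudoinverse[of t x] assms by (simp add: quantile_def)
qed

lemma quantile_left_continuous:
  assumes M: "real_distribution M" and t: "0 < t" "t < 1"
  shows "(quantile M \<longlongrightarrow> quantile M t) (at_left t)"
proof (rule order_tendstoI)
  fix a assume "quantile M t < a"
  have mono: "quantile M s \<le> quantile M t" if "0 < s" "s < t" for s
    using quantile_le_iff[OF M t, of "quantile M t"] quantile_le_iff[OF M, of s] that t by auto
  have "eventually (\<lambda>s. 0 < s \<and> s < t) (at_left t)"
    using t by (auto simp: eventually_at_left_field intro: exI[of _ 0])
  then show "eventually (\<lambda>s. quantile M s < a) (at_left t)"
    by eventually_elim (use mono \<open>quantile M t < a\<close> in fastforce)
next
  fix a assume "a < quantile M t"
  then have "cdf M a < t" using quantile_le_iff[OF M t, of a] by auto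
  then have "eventually (\<lambda>s. max (cdf M a) 0 < s \<and> s < t) (at_left t)"
    using t by (auto simp: eventually_at_left_field intro: exI[of _ "max (cdf M a) 0"])
  then show "eventually (\<lambda>s. a < quantile M s) (at_left t)"
  proof eventually_elim
    case (elim s)
    then show ?case using quantile_le_iff[OF M, of s a] t by auto
  qed
qed

lemma cdf_between_0_1:
  assumes "real_distribution M"
  shows "0 \<le> cdf M x" "cdf M x \<le> 1"
proof -
  interpret real_distribution M by fact
  show "0 \<le> cdf M x" "cdf M x \<le> 1" by (simp_all add: cdf_nonneg cdf_bounded_prob)
qed

lemma measurable_cdf [measurable]: "real_distribution M \<Longrightarrow> cdf M \<in> borel_measurable borel"
  unfolding cdf_distribution_def[symmetric] by (rule cdf_distribution.measurable_C)

section \<open>The uniform distribution on the unit interval\<close>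

definition uniform01 :: "real measure" where
  "uniform01 = restrict_space lborel {0<..<1}"

lemma space_uniform01 [simp]: "space uniform01 = {0<..<1}"
  by (simp add: uniform01_def space_restrict_space)

lemma sets_uniform01: "sets uniform01 = sets (restrict_space borel {0<..<1})"
  unfolding uniform01_def by (rule sets_restrict_space_cong) simp

lemma prob_space_uniform01: "prob_space uniform01"
  unfolding uniform01_def
  by (auto simp: emeasure_restrict_space space_restrict_space intro!: prob_spaceI)

lemma emeasure_uniform01_Ioc:
  assumes "0 \<le> a" "a \<le> b" "b \<le> 1"
  shows "emeasure uniform01 {u \<in> {0<..<1}. a < u \<and> u \<le> b} = b - a"
proof -
  let ?A = "{u \<in> {0<..<1}. a < u \<and> u \<le> b}"
  have "emeasure uniform01 ?A = emeasure lborel ?A"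
    unfolding uniform01_def by (rule emeasure_restrict_space) auto
  also have "\<dots> = emeasure lborel {a<..b}"
    using AE_lborel_singleton[of 1] assms by (intro emeasure_eq_AE) (auto elim!: eventually_mono)
  finally show ?thesis using assms by simp
qed

lemma measurable_uniform01_galois:
  fixes q G :: "real \<Rightarrow> real"
  assumes galois: "\<And>t x. 0 < t \<Longrightarrow> t < 1 \<Longrightarrow> q t \<le> x \<longleftrightarrow> t \<le> G x"
  shows "q \<in> borel_measurable uniform01"
proof (rule borel_measurableI_le)
  fix x
  have "{u \<in> space uniform01. q u \<le> x} = {0<..<1} \<inter> {..G x}"
    using galois by auto
  also have "\<dots> \<in> sets uniform01"
    unfolding sets_uniform01 by (subst sets_restrict_space_iff) auto
  finally show "{u \<in> space uniform01. q u \<le> x} \<in> sets uniform01" .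
qed

lemma
  fixes q G :: "real \<Rightarrow> real"
  assumes galois: "\<And>t x. 0 < t \<Longrightarrow> t < 1 \<Longrightarrow> q t \<le> x \<longleftrightarrow> t \<le> G x"
    and G: "\<And>x. 0 \<le> G x" "\<And>x. G x \<le> 1"
  shows real_distribution_distr_galois: "real_distribution (distr uniform01 borel q)"
    and cdf_distr_galois: "cdf (distr uniform01 borel q) = G"
    and quantile_distr_galois: "0 < t \<Longrightarrow> t < 1 \<Longrightarrow> quantile (distr uniform01 borel q) t = q t"
proof -
  interpret prob_space uniform01 by (rule prob_space_uniform01)
  have q: "q \<in> borel_measurable uniform01" by (rule measurable_uniform01_galois[OF galois])
  then show "real_distribution (distr uniform01 borel q)" by simp
  have "cdf (distr uniform01 borel q) x = G x" for x
  proof -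
    have "q -` {..x} \<inter> space uniform01 = {u \<in> {0<..<1}. 0 < u \<and> u \<le> G x}"
      using galois by auto
    then have "emeasure (distr uniform01 borel q) {..x} = G x"
      using q G emeasure_uniform01_Ioc[of 0 "G x"] by (simp add: emeasure_distr)
    then show ?thesis using G by (simp add: cdf_def measure_def)
  qed
  then show cdf: "cdf (distr uniform01 borel q) = G" ..
  show "quantile (distr uniform01 borel q) t = q t" if "0 < t" "t < 1"
  proof -
    have "{x. t \<le> G x} = {q t..}" using galois[OF that] by auto
    then show ?thesis by (simp add: quantile_def cdf)
  qed
qed

lemma measurable_quantile: "real_distribution M \<Longrightarrow> quantile M \<in> borel_measurable uniform01"
  by (rule measurable_uniform01_galois) (rule quantile_le_iff)

lemma distr_uniform01_quantile: "real_distribution M \<Longrightarrow> distr uniform01 borel (quantile M) = M"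
  unfolding uniform01_def quantile_def[abs_def] cdf_distribution_def[symmetric]
  by (rule cdf_distribution.distr_I_eq_M)

section \<open>The Wasserstein distance on the real line\<close>

lemma ennreal_abs_diff_eq_nn_integral:
  "ennreal \<bar>a - b\<bar> = (\<integral>\<^sup>+ t. of_bool ((a \<le> t) \<noteq> (b \<le> t)) \<partial>lborel)"
proof -
  have "(\<lambda>t. of_bool ((a \<le> t) \<noteq> (b \<le> t)) :: ennreal) = indicator {min a b..<max a b}"
    by (auto simp: indicator_def min_def max_def fun_eq_iff)
  then show ?thesis by (simp add: min_def max_def)
qed

lemma
  assumes "cp \<in> couplings mu nu"
  shows prob_space_coupling: "prob_space cp"
    and sets_coupling: "sets cp = sets (borel \<Otimes>\<^sub>M borel)"
    and space_coupling: "space cp = UNIV"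
  using assms sets_eq_imp_space_eq[of cp "borel \<Otimes>\<^sub>M borel"]
  by (auto simp: couplings_def space_pair_measure)

lemma cdf_diff_le_coupling_mismatch:
  assumes "cp \<in> couplings mu nu"
  shows "\<bar>cdf mu t - cdf nu t\<bar> \<le> measure cp {p. (fst p \<le> t) \<noteq> (snd p \<le> t)}"
proof -
  interpret prob_space cp by (rule prob_space_coupling[OF assms])
  note space = space_coupling[OF assms] and [measurable_cong] = sets_coupling[OF assms]
  from assms have mu: "mu = distr cp borel fst" and nu: "nu = distr cp borel snd"
    by (auto simp: couplings_def)
  let ?A = "{p. fst p \<le> t}" and ?B = "{p. snd p \<le> t}" and ?D = "{p. (fst p \<le> t) \<noteq> (snd p \<le> t)}"
  have "{p \<in> space cp. fst p \<le> t} \<in> sets cp" "{p \<in> space cp. snd p \<le> t} \<in> sets cp"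
    "{p \<in> space cp. (fst p \<le> t) \<noteq> (snd p \<le> t)} \<in> sets cp"
    by measurable
  then have sets_ABD: "?A \<in> sets cp" "?B \<in> sets cp" "?D \<in> sets cp"
    by (simp_all add: space)
  have subadd: "measure cp X \<le> measure cp Y + measure cp Z"
    if "X \<subseteq> Y \<union> Z" "Y \<in> sets cp" "Z \<in> sets cp" for X Y Z
    using finite_measure_mono[OF that(1)] measure_subadditive[OF that(2,3)] that(2,3) by simp
  have "cdf mu t = measure cp ?A" "cdf nu t = measure cp ?B"
    unfolding cdf_def mu nu using sets_ABD by (subst measure_distr; simp add: space vimage_def)+
  moreover have "measure cp ?A \<le> measure cp ?D + measure cp ?B"
    by (rule subadd) (use sets_ABD in auto)
  moreover have "measure cp ?B \<le> measure cp ?D + measure cp ?A"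
    by (rule subadd) (use sets_ABD in auto)
  ultimately show ?thesis by linarith
qed

lemma nn_integral_abs_cdf_le_coupling:
  assumes cp: "cp \<in> couplings mu nu"
  shows "(\<integral>\<^sup>+ t. \<bar>cdf mu t - cdf nu t\<bar> \<partial>lborel) \<le> (\<integral>\<^sup>+ p. \<bar>fst p - snd p\<bar> \<partial>cp)"
proof -
  interpret prob_space cp by (rule prob_space_coupling[OF cp])
  interpret pair_sigma_finite cp lborel ..
  note space = space_coupling[OF cp] and [measurable_cong] = sets_coupling[OF cp]
  let ?mismatch = "\<lambda>p t. of_bool ((fst p \<le> t) \<noteq> (snd p \<le> t)) :: ennreal"
  have "(\<integral>\<^sup>+ t. \<bar>cdf mu t - cdf nu t\<bar> \<partial>lborel) \<le> (\<integral>\<^sup>+ t. (\<integral>\<^sup>+ p. ?mismatch p t \<partial>cp) \<partial>lborel)"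
  proof (rule nn_integral_mono)
    fix t :: real
    let ?D = "{p. (fst p \<le> t) \<noteq> (snd p \<le> t)}"
    have "{p \<in> space cp. (fst p \<le> t) \<noteq> (snd p \<le> t)} \<in> sets cp" by measurable
    then have "?D \<in> sets cp" by (simp add: space)
    moreover have "(\<lambda>p. ?mismatch p t) = indicator ?D" by (auto simp: indicator_def)
    ultimately have "(\<integral>\<^sup>+ p. ?mismatch p t \<partial>cp) = measure cp ?D"
      by (simp add: emeasure_eq_measure)
    then show "ennreal \<bar>cdf mu t - cdf nu t\<bar> \<le> (\<integral>\<^sup>+ p. ?mismatch p t \<partial>cp)"
      using cdf_diff_le_coupling_mismatch[OF cp] by (simp add: ennreal_leI)
  qed
  also have "\<dots> = (\<integral>\<^sup>+ p. (\<integral>\<^sup>+ t. ?mismatch p t \<partial>lborel) \<partial>cp)"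
    by (rule Fubini') measurable
  also have "\<dots> = (\<integral>\<^sup>+ p. \<bar>fst p - snd p\<bar> \<partial>cp)"
    by (simp add: ennreal_abs_diff_eq_nn_integral)
  finally show ?thesis .
qed

lemma nn_integral_abs_quantile_eq_cdf:
  assumes mu: "real_distribution mu" and nu: "real_distribution nu"
  shows "(\<integral>\<^sup>+ u. \<bar>quantile mu u - quantile nu u\<bar> \<partial>uniform01)
       = (\<integral>\<^sup>+ t. \<bar>cdf mu t - cdf nu t\<bar> \<partial>lborel)"
proof -
  interpret prob_space uniform01 by (rule prob_space_uniform01)
  interpret pair_sigma_finite uniform01 lborel ..
  have [measurable_cong]: "sets uniform01 = sets (restrict_space borel {0<..<1})"
    by (fact sets_uniform01)
  have [measurable]: "cdf mu \<in> borel_measurable borel" "cdf nu \<in> borel_measurable borel"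
    using mu nu by (simp_all add: measurable_cdf)
  have [measurable]: "(\<lambda>u. u) \<in> borel_measurable (restrict_space borel {0<..<1::real})"
    by (simp add: measurable_restrict_space1)
  let ?mismatch = "\<lambda>u t. of_bool ((u \<le> cdf mu t) \<noteq> (u \<le> cdf nu t)) :: ennreal"
  have "(\<integral>\<^sup>+ u. \<bar>quantile mu u - quantile nu u\<bar> \<partial>uniform01)
      = (\<integral>\<^sup>+ u. (\<integral>\<^sup>+ t. ?mismatch u t \<partial>lborel) \<partial>uniform01)"
    by (rule nn_integral_cong)
      (simp add: ennreal_abs_diff_eq_nn_integral quantile_le_iff[OF mu] quantile_le_iff[OF nu])
  also have "\<dots> = (\<integral>\<^sup>+ t. (\<integral>\<^sup>+ u. ?mismatch u t \<partial>uniform01) \<partial>lborel)"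
    by (rule Fubini'[symmetric]) measurable
  also have "\<dots> = (\<integral>\<^sup>+ t. \<bar>cdf mu t - cdf nu t\<bar> \<partial>lborel)"
  proof (rule nn_integral_cong)
    fix t :: real
    let ?a = "min (cdf mu t) (cdf nu t)" and ?b = "max (cdf mu t) (cdf nu t)"
    let ?D = "{u \<in> {0<..<1}. ?a < u \<and> u \<le> ?b}"
    have "?D \<in> sets uniform01"
      unfolding sets_uniform01 by (subst sets_restrict_space_iff) auto
    have "(\<integral>\<^sup>+ u. ?mismatch u t \<partial>uniform01) = (\<integral>\<^sup>+ u. indicator ?D u \<partial>uniform01)"
      by (rule nn_integral_cong) (auto simp: indicator_def min_def max_def)
    also have "\<dots> = emeasure uniform01 ?D"
      using \<open>?D \<in> sets uniform01\<close> by simp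
    also have "\<dots> = ?b - ?a"
      using cdf_between_0_1[OF mu] cdf_between_0_1[OF nu] by (intro emeasure_uniform01_Ioc) auto
    finally show "(\<integral>\<^sup>+ u. ?mismatch u t \<partial>uniform01) = \<bar>cdf mu t - cdf nu t\<bar>"
      by (simp add: min_def max_def)
  qed
  finally show ?thesis .
qed

lemma INF_coupling_cost_eq_nn_integral_cdf:
  assumes mu: "real_distribution mu" and nu: "real_distribution nu"
  shows "(\<Sqinter>cp\<in>couplings mu nu. \<integral>\<^sup>+ p. \<bar>fst p - snd p\<bar> \<partial>cp)
       = (\<integral>\<^sup>+ t. \<bar>cdf mu t - cdf nu t\<bar> \<partial>lborel)"
proof (rule antisym)
  interpret prob_space uniform01 by (rule prob_space_uniform01)
  let ?q = "\<lambda>u. (quantile mu u, quantile nu u)"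
  let ?cp = "distr uniform01 (borel \<Otimes>\<^sub>M borel) ?q"
  have q: "?q \<in> measurable uniform01 (borel \<Otimes>\<^sub>M borel)"
    using measurable_quantile[OF mu] measurable_quantile[OF nu] by measurable
  have "?cp \<in> couplings mu nu"
    using q prob_space_distr[OF q]
    by (simp add: couplings_def distr_distr comp_def distr_uniform01_quantile mu nu)
  then have "(\<Sqinter>cp\<in>couplings mu nu. \<integral>\<^sup>+ p. \<bar>fst p - snd p\<bar> \<partial>cp)
      \<le> (\<integral>\<^sup>+ p. \<bar>fst p - snd p\<bar> \<partial>?cp)"
    by (rule INF_lower)
  also have "\<dots> = (\<integral>\<^sup>+ u. \<bar>quantile mu u - quantile nu u\<bar> \<partial>uniform01)"
    using q by (simp add: nn_integral_distr)
  also have "\<dots> = (\<integral>\<^sup>+ t. \<bar>cdf mu t - cdf nu t\<bar> \<partial>lborel)"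
    by (rule nn_integral_abs_quantile_eq_cdf[OF mu nu])
  finally show "(\<Sqinter>cp\<in>couplings mu nu. \<integral>\<^sup>+ p. \<bar>fst p - snd p\<bar> \<partial>cp) \<le> \<dots>" .
next
  show "(\<integral>\<^sup>+ t. \<bar>cdf mu t - cdf nu t\<bar> \<partial>lborel)
      \<le> (\<Sqinter>cp\<in>couplings mu nu. \<integral>\<^sup>+ p. \<bar>fst p - snd p\<bar> \<partial>cp)"
    by (rule INF_greatest) (rule nn_integral_abs_cdf_le_coupling)
qed

lemma real_distribution_if_P1: "P1 M \<Longrightarrow> real_distribution M"
  by (simp add: P1_def real_distribution_def real_distribution_axioms_def)

lemma integrable_quantile:
  assumes "P1 M"
  shows "integrable uniform01 (quantile M)"
proof -
  have M: "real_distribution M" using assms by (rule real_distribution_if_P1)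
  have "integrable M (\<lambda>x. x)"
    using assms integrable_abs_iff[OF measurable_ident_sets[of M borel]] by (simp add: P1_def)
  then have "integrable (distr uniform01 borel (quantile M)) (\<lambda>x. x)"
    using distr_uniform01_quantile[OF M] by simp
  then show ?thesis
    using measurable_quantile[OF M] by (simp add: integrable_distr_eq)
qed

lemma W1_eq_integral_quantile:
  assumes mu: "P1 mu" and nu: "P1 nu"
  shows "W1 mu nu = (\<integral> u. \<bar>quantile mu u - quantile nu u\<bar> \<partial>uniform01)"
proof -
  have dist: "real_distribution mu" "real_distribution nu"
    using mu nu by (simp_all add: real_distribution_if_P1)
  have "W1 mu nu = enn2real (\<integral>\<^sup>+ u. \<bar>quantile mu u - quantile nu u\<bar> \<partial>uniform01)"
    by (simp add: W1_def INF_coupling_cost_eq_nn_integral_cdf[OF dist]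
        nn_integral_abs_quantile_eq_cdf[OF dist])
  also have "\<dots> = (\<integral> u. \<bar>quantile mu u - quantile nu u\<bar> \<partial>uniform01)"
    using measurable_quantile[OF dist(1)] measurable_quantile[OF dist(2)]
    by (intro integral_eq_nn_integral[symmetric]) auto
  finally show ?thesis .
qed

lemma
  assumes mu: "P1 mu" and nu: "P1 nu"
  shows integrable_abs_cdf_diff: "integrable lborel (\<lambda>t. \<bar>cdf mu t - cdf nu t\<bar>)"
    and W1_eq_integral_cdf: "W1 mu nu = (\<integral> t. \<bar>cdf mu t - cdf nu t\<bar> \<partial>lborel)"
proof -
  have dist: "real_distribution mu" "real_distribution nu"
    using mu nu by (simp_all add: real_distribution_if_P1)
  have "integrable uniform01 (\<lambda>u. \<bar>quantile mu u - quantile nu u\<bar>)"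
    using integrable_quantile[OF mu] integrable_quantile[OF nu] by auto
  then have "(\<integral>\<^sup>+ t. \<bar>cdf mu t - cdf nu t\<bar> \<partial>lborel) < \<infinity>"
    by (simp add: integrable_iff_bounded nn_integral_abs_quantile_eq_cdf[OF dist])
  moreover have "(\<lambda>t. \<bar>cdf mu t - cdf nu t\<bar>) \<in> borel_measurable lborel"
    using dist by (simp add: measurable_cdf measurable_lborel1)
  ultimately show int: "integrable lborel (\<lambda>t. \<bar>cdf mu t - cdf nu t\<bar>)"
    by (intro integrableI_bounded) auto
  show "W1 mu nu = (\<integral> t. \<bar>cdf mu t - cdf nu t\<bar> \<partial>lborel)"
    unfolding W1_def INF_coupling_cost_eq_nn_integral_cdf[OF dist]
    using dist
    by (intro integral_eq_nn_integral[symmetric]) (auto simp: measurable_cdf measurable_lborel1)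
qed

section \<open>Weighted medians\<close>

definition wmedian_cost :: "nat \<Rightarrow> (nat \<Rightarrow> real) \<Rightarrow> (nat \<Rightarrow> real) \<Rightarrow> real \<Rightarrow> real" where
  "wmedian_cost N lam v y = (\<Sum>i<N. lam i * \<bar>y - v i\<bar>)"

lemma wmedian_iff_cost: "y \<in> wmedian N lam v \<longleftrightarrow> (\<forall>z. wmedian_cost N lam v y \<le> wmedian_cost N lam v z)"
  by (simp add: wmedian_def wmedian_cost_def)

lemma wmedian_cost_uminus: "wmedian_cost N lam (\<lambda>i. - v i) (- y) = wmedian_cost N lam v y"
  by (simp add: wmedian_cost_def abs_minus_commute)

lemma wmedian_uminus: "- y \<in> wmedian N lam (\<lambda>i. - v i) \<longleftrightarrow> y \<in> wmedian N lam v"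
proof -
  have "(\<forall>z. wmedian_cost N lam v y \<le> wmedian_cost N lam (\<lambda>i. - v i) z)
      \<longleftrightarrow> (\<forall>z. wmedian_cost N lam v y \<le> wmedian_cost N lam v z)"
    by (metis wmedian_cost_uminus minus_minus)
  then show ?thesis by (simp add: wmedian_iff_cost wmedian_cost_uminus)
qed

lemma sum_if_uminus_eq_diff:
  fixes lam :: "nat \<Rightarrow> real"
  shows "(\<Sum>i<N. if P i then lam i else - lam i)
    = (\<Sum>i | i < N \<and> P i. lam i) - (\<Sum>i | i < N \<and> \<not> P i. lam i)"
proof -
  have "(\<Sum>i<N. if P i then lam i else - lam i)
      = sum lam ({..<N} \<inter> {i. P i}) + sum (\<lambda>i. - lam i) ({..<N} \<inter> - {i. P i})"
    using sum.If_cases[of "{..<N}" P lam "\<lambda>i. - lam i"] by simp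
  moreover have "{..<N} \<inter> {i. P i} = {i. i < N \<and> P i}" "{..<N} \<inter> - {i. P i} = {i. i < N \<and> \<not> P i}"
    by auto
  ultimately show ?thesis by (simp add: sum_negf)
qed

lemma unit_simplex_sum_compl:
  assumes "unit_simplex N lam"
  shows "(\<Sum>i | i < N \<and> \<not> P i. lam i) = 1 - (\<Sum>i | i < N \<and> P i. lam i)"
proof -
  have "{..<N} = {i. i < N \<and> P i} \<union> {i. i < N \<and> \<not> P i}" by auto
  then have "(\<Sum>i<N. lam i) = (\<Sum>i | i < N \<and> P i. lam i) + (\<Sum>i | i < N \<and> \<not> P i. lam i)"
    by (metis (no_types, lifting) sum.union_disjoint finite_lessThan finite_subset
        disjoint_iff mem_Collect_eq sup_ge1 sup_ge2)
  then show ?thesis using assms by (simp add: unit_simplex_def)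
qed

lemma wmedian_cost_right_increment:
  fixes v :: "nat \<Rightarrow> real"
  assumes lam: "unit_simplex N lam" and "a \<le> z"
  defines "m \<equiv> (\<Sum>i | i < N \<and> v i \<le> a. lam i)"
  shows "wmedian_cost N lam v a + (z - a) * (2 * m - 1) \<le> wmedian_cost N lam v z"
    and "(\<And>i. i < N \<Longrightarrow> v i \<le> a \<or> z \<le> v i)
         \<Longrightarrow> wmedian_cost N lam v z = wmedian_cost N lam v a + (z - a) * (2 * m - 1)"
proof -
  let ?s = "\<lambda>i. if v i \<le> a then 1 else - 1 :: real"
  have "(\<Sum>i<N. lam i * (\<bar>a - v i\<bar> + (z - a) * ?s i))
      = (\<Sum>i<N. lam i * \<bar>a - v i\<bar> + (z - a) * (if v i \<le> a then lam i else - lam i))"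
    by (rule sum.cong) (auto simp: algebra_simps)
  also have "\<dots> = wmedian_cost N lam v a + (z - a) * (2 * m - 1)"
    by (simp add: wmedian_cost_def sum.distrib sum_distrib_left[symmetric] sum_if_uminus_eq_diff
        unit_simplex_sum_compl[OF lam] m_def)
  finally have "wmedian_cost N lam v a + (z - a) * (2 * m - 1)
      = (\<Sum>i<N. lam i * (\<bar>a - v i\<bar> + (z - a) * ?s i))" ..
  moreover have "\<bar>a - v i\<bar> + (z - a) * ?s i \<le> \<bar>z - v i\<bar>" for i
    using \<open>a \<le> z\<close> by auto
  moreover have "\<bar>a - v i\<bar> + (z - a) * ?s i = \<bar>z - v i\<bar>" if "v i \<le> a \<or> z \<le> v i" for i
    using \<open>a \<le> z\<close> that by auto
  moreover have "0 \<le> lam i" if "i < N" for i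
    using lam that by (simp add: unit_simplex_def)
  ultimately show "wmedian_cost N lam v a + (z - a) * (2 * m - 1) \<le> wmedian_cost N lam v z"
    and "(\<And>i. i < N \<Longrightarrow> v i \<le> a \<or> z \<le> v i)
         \<Longrightarrow> wmedian_cost N lam v z = wmedian_cost N lam v a + (z - a) * (2 * m - 1)"
    unfolding wmedian_cost_def by (auto intro!: sum_mono mult_left_mono sum.cong)
qed

lemma wmedian_cost_right_min_iff:
  fixes v :: "nat \<Rightarrow> real"
  assumes lam: "unit_simplex N lam"
  shows "(\<forall>z\<ge>a. wmedian_cost N lam v a \<le> wmedian_cost N lam v z)
     \<longleftrightarrow> 1/2 \<le> (\<Sum>i | i < N \<and> v i \<le> a. lam i)"
    (is "?min \<longleftrightarrow> 1/2 \<le> ?m")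
proof
  assume ?min
  define z where "z = Min (insert (a + 1) (v ` {i. i < N \<and> a < v i}))"
  have "a < z" by (simp add: z_def)
  have gap: "v i \<le> a \<or> z \<le> v i" if "i < N" for i
  proof (cases "a < v i")
    case True
    then show ?thesis unfolding z_def using that by (intro disjI2 Min_le) auto
  qed simp
  then have "wmedian_cost N lam v z = wmedian_cost N lam v a + (z - a) * (2 * ?m - 1)"
    using \<open>a < z\<close> by (intro wmedian_cost_right_increment(2)[OF lam]) auto
  moreover have "wmedian_cost N lam v a \<le> wmedian_cost N lam v z"
    using \<open>?min\<close> \<open>a < z\<close> by simp
  ultimately have "0 \<le> (z - a) * (2 * ?m - 1)" by linarith
  with \<open>a < z\<close> show "1/2 \<le> ?m" by (simp add: zero_le_mult_iff)
next
  assume "1/2 \<le> ?m"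
  show ?min
  proof (intro allI impI)
    fix z assume "a \<le> z"
    then have "0 \<le> (z - a) * (2 * ?m - 1)" using \<open>1/2 \<le> ?m\<close> by simp
    with wmedian_cost_right_increment(1)[OF lam \<open>a \<le> z\<close>, of v]
    show "wmedian_cost N lam v a \<le> wmedian_cost N lam v z" by linarith
  qed
qed

lemma wmedian_iff_half_masses:
  fixes v :: "nat \<Rightarrow> real"
  assumes lam: "unit_simplex N lam"
  shows "y \<in> wmedian N lam v \<longleftrightarrow>
    1/2 \<le> (\<Sum>i | i < N \<and> v i \<le> y. lam i) \<and> 1/2 \<le> (\<Sum>i | i < N \<and> y \<le> v i. lam i)"
proof -
  have "(\<forall>z\<le>y. wmedian_cost N lam v y \<le> wmedian_cost N lam v z)
      \<longleftrightarrow> (\<forall>z\<ge>-y. wmedian_cost N lam (\<lambda>i. - v i) (- y) \<le> wmedian_cost N lam (\<lambda>i. - v i) z)"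
    by (metis wmedian_cost_uminus minus_minus neg_le_iff_le)
  then have "(\<forall>z\<le>y. wmedian_cost N lam v y \<le> wmedian_cost N lam v z)
      \<longleftrightarrow> 1/2 \<le> (\<Sum>i | i < N \<and> y \<le> v i. lam i)"
    by (simp add: wmedian_cost_right_min_iff[OF lam])
  moreover have "y \<in> wmedian N lam v \<longleftrightarrow>
      (\<forall>z\<ge>y. wmedian_cost N lam v y \<le> wmedian_cost N lam v z) \<and>
      (\<forall>z\<le>y. wmedian_cost N lam v y \<le> wmedian_cost N lam v z)"
    by (auto simp: wmedian_iff_cost intro: le_cases)
  ultimately show ?thesis by (simp add: wmedian_cost_right_min_iff[OF lam])
qed

lemma wmedian_unique:
  assumes lam: "unit_simplex N lam" and no_half: "\<not> (\<exists>I\<subseteq>{..<N}. (\<Sum>i\<in>I. lam i) = 1/2)"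
    and "y1 \<in> wmedian N lam v" "y2 \<in> wmedian N lam v"
  shows "y1 = y2"
proof -
  have no_gap: False if "y \<in> wmedian N lam v" "y' \<in> wmedian N lam v" "y < y'" for y y'
  proof -
    let ?I = "{i. i < N \<and> v i \<le> y}"
    have "(\<Sum>i | i < N \<and> y' \<le> v i. lam i) \<le> (\<Sum>i | i < N \<and> \<not> v i \<le> y. lam i)"
      using lam \<open>y < y'\<close> by (intro sum_mono2) (auto simp: unit_simplex_def)
    then have "sum lam ?I = 1/2"
      using that by (simp add: wmedian_iff_half_masses[OF lam] unit_simplex_sum_compl[OF lam])
    moreover have "?I \<subseteq> {..<N}" by auto
    ultimately show False using no_half by blast
  qed
  show ?thesis
    using no_gap[OF assms(3,4)] no_gap[OF assms(4,3)] by (cases y1 y2 rule: linorder_cases) auto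
qed

definition half_mass_sets :: "nat \<Rightarrow> (nat \<Rightarrow> real) \<Rightarrow> nat set set" where
  "half_mass_sets N lam = {I. I \<subseteq> {..<N} \<and> 1/2 \<le> (\<Sum>i\<in>I. lam i)}"

definition lower_wmedian :: "nat \<Rightarrow> (nat \<Rightarrow> real) \<Rightarrow> (nat \<Rightarrow> real) \<Rightarrow> real" where
  "lower_wmedian N lam v = Min ((\<lambda>I. Max (v ` I)) ` half_mass_sets N lam)"

definition upper_wmedian :: "nat \<Rightarrow> (nat \<Rightarrow> real) \<Rightarrow> (nat \<Rightarrow> real) \<Rightarrow> real" where
  "upper_wmedian N lam v = - lower_wmedian N lam (\<lambda>i. - v i)"

lemma
  assumes "unit_simplex N lam"
  shows finite_half_mass_sets: "finite (half_mass_sets N lam)"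
    and half_mass_sets_nonempty: "half_mass_sets N lam \<noteq> {}"
    and half_mass_setsD: "I \<in> half_mass_sets N lam \<Longrightarrow> finite I \<and> I \<noteq> {} \<and> I \<subseteq> {..<N}"
  using assms
  by (auto simp: half_mass_sets_def unit_simplex_def intro: finite_subset[of _ "{..<N}"])

lemma le_lower_wmedian_iff:
  "unit_simplex N lam \<Longrightarrow> u \<le> lower_wmedian N lam v \<longleftrightarrow> (\<forall>I\<in>half_mass_sets N lam. \<exists>i\<in>I. u \<le> v i)"
  using finite_half_mass_sets[of N lam] half_mass_sets_nonempty[of N lam] half_mass_setsD[of N lam]
  by (auto simp: lower_wmedian_def Min_ge_iff Max_ge_iff)

lemma upper_wmedian_le_iff:
  "unit_simplex N lam \<Longrightarrow> upper_wmedian N lam v \<le> x \<longleftrightarrow> (\<forall>I\<in>half_mass_sets N lam. \<exists>i\<in>I. v i \<le> x)"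
  by (simp add: upper_wmedian_def minus_le_iff le_lower_wmedian_iff)

lemma lower_wmedian_obtains:
  assumes "unit_simplex N lam"
  obtains I where "I \<in> half_mass_sets N lam" "lower_wmedian N lam v = Max (v ` I)"
proof -
  have "lower_wmedian N lam v \<in> (\<lambda>I. Max (v ` I)) ` half_mass_sets N lam"
    unfolding lower_wmedian_def using finite_half_mass_sets[OF assms] half_mass_sets_nonempty[OF assms]
    by (intro Min_in) auto
  then show ?thesis using that by blast
qed

lemma lower_wmedian_mem:
  assumes "unit_simplex N lam"
  shows "\<exists>i<N. lower_wmedian N lam v = v i"
proof -
  obtain I where I: "I \<in> half_mass_sets N lam" "lower_wmedian N lam v = Max (v ` I)"
    using lower_wmedian_obtains[OF assms] .
  then show ?thesis
    using Max_in[of "v ` I"] half_mass_setsD[OF assms I(1)] by fastforce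
qed

lemma upper_wmedian_mem: "unit_simplex N lam \<Longrightarrow> \<exists>i<N. upper_wmedian N lam v = v i"
  using lower_wmedian_mem[of N lam "\<lambda>i. - v i"] by (auto simp: upper_wmedian_def)

lemma lower_wmedian_in_wmedian:
  assumes lam: "unit_simplex N lam"
  shows "lower_wmedian N lam v \<in> wmedian N lam v"
proof -
  define a where "a = lower_wmedian N lam v"
  obtain I where I: "I \<in> half_mass_sets N lam" "a = Max (v ` I)"
    using lower_wmedian_obtains[OF lam] a_def by metis
  have "1/2 \<le> sum lam I" using I(1) by (simp add: half_mass_sets_def)
  also have "\<dots> \<le> (\<Sum>i | i < N \<and> v i \<le> a. lam i)"
    using lam half_mass_setsD[OF lam I(1)] I(2)
    by (intro sum_mono2) (auto simp: unit_simplex_def)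
  finally have "1/2 \<le> (\<Sum>i | i < N \<and> v i \<le> a. lam i)" .
  moreover have "{i. i < N \<and> \<not> a \<le> v i} \<notin> half_mass_sets N lam"
    using le_lower_wmedian_iff[OF lam, of a v] by (auto simp: a_def)
  then have "1/2 \<le> (\<Sum>i | i < N \<and> a \<le> v i. lam i)"
    by (auto simp: half_mass_sets_def unit_simplex_sum_compl[OF lam])
  ultimately show ?thesis
    by (simp add: wmedian_iff_half_masses[OF lam] a_def)
qed

lemma upper_wmedian_in_wmedian:
  assumes "unit_simplex N lam"
  shows "upper_wmedian N lam v \<in> wmedian N lam v"
  using lower_wmedian_in_wmedian[OF assms, of "\<lambda>i. - v i"] wmedian_uminus[of "upper_wmedian N lam v"]
  by (simp add: upper_wmedian_def)

lemma wmedian_limit: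
  fixes v :: "nat \<Rightarrow> 'a \<Rightarrow> real"
  assumes median: "\<exists>\<^sub>F x in F. y x \<in> wmedian N lam (\<lambda>i. v i x)"
    and y: "(y \<longlongrightarrow> y0) F" and v: "\<And>i. i < N \<Longrightarrow> (v i \<longlongrightarrow> v0 i) F"
  shows "y0 \<in> wmedian N lam v0"
  unfolding wmedian_iff_cost
proof
  fix z
  let ?g = "\<lambda>x. wmedian_cost N lam (\<lambda>i. v i x) z - wmedian_cost N lam (\<lambda>i. v i x) (y x)"
  have "(?g \<longlongrightarrow> wmedian_cost N lam v0 z - wmedian_cost N lam v0 y0) F"
    unfolding wmedian_cost_def by (intro tendsto_intros y v) auto
  show "wmedian_cost N lam v0 y0 \<le> wmedian_cost N lam v0 z"
  proof (rule ccontr)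
    assume "\<not> ?thesis"
    then have "eventually (\<lambda>x. ?g x < 0) F"
      using \<open>(?g \<longlongrightarrow> _) F\<close> by (intro order_tendstoD(2)) auto
    with median have "\<exists>\<^sub>F x in F. False"
      by (rule frequently_eventually_frequently[THEN frequently_elim1])
        (auto simp: wmedian_iff_cost dest!: spec[where x = z])
    then show False by simp
  qed
qed

section \<open>Wasserstein medians\<close>

lemma AE_eq_if_le_and_integral_le:
  fixes f g :: "'a \<Rightarrow> real"
  assumes f: "integrable M f" and g: "integrable M g"
    and le: "\<And>x. x \<in> space M \<Longrightarrow> g x \<le> f x" and int_le: "(\<integral>x. f x \<partial>M) \<le> (\<integral>x. g x \<partial>M)"
  shows "AE x in M. f x = g x"
proof -
  have "0 \<le> (\<integral>x. f x - g x \<partial>M)"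
    using le by (intro Bochner_Integration.integral_nonneg) simp
  then have "(\<integral>x. f x - g x \<partial>M) = 0"
    using int_le by (simp add: Bochner_Integration.integral_diff[OF f g])
  then have "AE x in M. f x - g x = 0"
    using f g le by (subst (asm) integral_nonneg_eq_0_iff_AE) auto
  then show ?thesis by (auto elim: eventually_mono)
qed

lemma AE_lborel_ex_between:
  fixes a b :: real
  assumes "AE x in lborel. P x" "a < b"
  shows "\<exists>x. a < x \<and> x < b \<and> P x"
proof (rule ccontr)
  assume "\<not> ?thesis"
  then have "AE x in lborel. x \<notin> {a<..<b}"
    using assms(1) by (auto elim: eventually_mono)
  then have "{a<..<b} \<in> null_sets lborel"
    by (subst AE_iff_null_sets) auto
  with assms(2) show False by (auto dest: null_setsD1)
qed

lemma frequently_at_right_if_AE_lborel: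
  fixes t :: real
  shows "AE x in lborel. P x \<Longrightarrow> \<exists>\<^sub>F x in at_right t. P x"
  unfolding frequently_def eventually_at_right_field by (metis AE_lborel_ex_between)

lemma frequently_at_left_if_AE_uniform01:
  fixes t :: real
  assumes "AE x in uniform01. P x" and t: "0 < t" "t < 1"
  shows "\<exists>\<^sub>F x in at_left t. P x"
  unfolding frequently_def eventually_at_left_field
proof
  assume "\<exists>b<t. \<forall>y>b. y < t \<longrightarrow> \<not> P y"
  then obtain b where b: "b < t" "\<And>y. b < y \<Longrightarrow> y < t \<Longrightarrow> \<not> P y" by blast
  have ae: "AE x in lborel. x \<in> {0<..<1} \<longrightarrow> P x"
    using assms(1) unfolding uniform01_def by (subst (asm) AE_restrict_space_iff) auto
  obtain x where "max b 0 < x" "x < t" "x \<in> {0<..<1} \<longrightarrow> P x"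
    using AE_lborel_ex_between[OF ae, of "max b 0" t] b t by auto
  then show False using b t by auto
qed

lemma WMed_iff_AE_wmedian:
  fixes phi :: "real measure \<Rightarrow> real \<Rightarrow> real" and M :: "real measure"
  assumes lam: "unit_simplex N lam"
    and integrable: "\<And>i mu. i < N \<Longrightarrow> P1 mu \<Longrightarrow> integrable M (\<lambda>t. \<bar>phi (nus i) t - phi mu t\<bar>)"
    and W1_eq: "\<And>i mu. i < N \<Longrightarrow> P1 mu \<Longrightarrow> W1 (nus i) mu = (\<integral>t. \<bar>phi (nus i) t - phi mu t\<bar> \<partial>M)"
    and rho: "P1 rho" "\<And>t. t \<in> space M \<Longrightarrow> phi rho t \<in> wmedian N lam (\<lambda>i. phi (nus i) t)"
    and nu: "P1 nu"
  shows "nu \<in> WMed N lam nus \<longleftrightarrow> (AE t in M. phi nu t \<in> wmedian N lam (\<lambda>i. phi (nus i) t))"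
proof -
  define cost where "cost mu t = wmedian_cost N lam (\<lambda>i. phi (nus i) t) (phi mu t)" for mu t
  have cost_eq: "cost mu t = (\<Sum>i<N. lam i * \<bar>phi (nus i) t - phi mu t\<bar>)" for mu t
    by (simp add: cost_def wmedian_cost_def abs_minus_commute)
  have cost_integrable: "integrable M (cost mu)" if "P1 mu" for mu
    unfolding cost_eq[abs_def] using integrable[OF _ that] by auto
  have total_cost: "(\<Sum>i<N. lam i * W1 (nus i) mu) = (\<integral>t. cost mu t \<partial>M)" if "P1 mu" for mu
    unfolding cost_eq using integrable[OF _ that] W1_eq[OF _ that] by (simp add: integral_sum)
  have median_iff: "phi mu t \<in> wmedian N lam (\<lambda>i. phi (nus i) t)
      \<longleftrightarrow> (\<forall>z. cost mu t \<le> wmedian_cost N lam (\<lambda>i. phi (nus i) t) z)"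
    for mu t by (simp add: cost_def wmedian_iff_cost)
  show ?thesis
  proof
    assume "nu \<in> WMed N lam nus"
    \<comment> \<open>\<open>rho\<close> minimises the integrand everywhere, so equal total cost forces a.e. equality.\<close>
    then have "(\<integral>t. cost nu t \<partial>M) \<le> (\<integral>t. cost rho t \<partial>M)"
      using rho(1) nu by (simp add: WMed_def total_cost)
    moreover have "cost rho t \<le> cost nu t" if "t \<in> space M" for t
      using rho(2)[OF that] by (simp add: median_iff cost_def)
    ultimately have "AE t in M. cost nu t = cost rho t"
      using cost_integrable[OF nu] cost_integrable[OF rho(1)] by (intro AE_eq_if_le_and_integral_le)
    then show "AE t in M. phi nu t \<in> wmedian N lam (\<lambda>i. phi (nus i) t)"
      using AE_space
    proof eventually_elim
      case (elim t)
      then show ?case using rho(2)[of t] by (simp add: median_iff)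
    qed
  next
    assume median: "AE t in M. phi nu t \<in> wmedian N lam (\<lambda>i. phi (nus i) t)"
    have "(\<Sum>i<N. lam i * W1 (nus i) nu) \<le> (\<Sum>i<N. lam i * W1 (nus i) mu)" if "P1 mu" for mu
      unfolding total_cost[OF nu] total_cost[OF that]
      using cost_integrable[OF nu] cost_integrable[OF that] median
      by (intro integral_mono_AE) (auto elim!: eventually_mono simp: median_iff cost_def)
    then show "nu \<in> WMed N lam nus" using nu by (simp add: WMed_def)
  qed
qed

definition median_measure :: "nat \<Rightarrow> (nat \<Rightarrow> real) \<Rightarrow> (nat \<Rightarrow> real measure) \<Rightarrow> real measure" where
  "median_measure N lam nus = distr uniform01 borel (\<lambda>t. upper_wmedian N lam (\<lambda>i. quantile (nus i) t))"

context
  fixes N :: nat and lam :: "nat \<Rightarrow> real" and nus :: "nat \<Rightarrow> real measure"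
  assumes lam: "unit_simplex N lam" and nus: "\<forall>i<N. P1 (nus i)"
begin

lemma upper_wmedian_quantile_le_iff:
  assumes "0 < t" "t < 1"
  shows "upper_wmedian N lam (\<lambda>i. quantile (nus i) t) \<le> x \<longleftrightarrow> t \<le> lower_wmedian N lam (\<lambda>i. cdf (nus i) x)"
proof -
  have "quantile (nus i) t \<le> x \<longleftrightarrow> t \<le> cdf (nus i) x" if "i < N" for i
    using nus that assms by (simp add: quantile_le_iff real_distribution_if_P1)
  then show ?thesis
    using half_mass_setsD[OF lam]
    by (simp add: upper_wmedian_le_iff[OF lam] le_lower_wmedian_iff[OF lam]) blast
qed

lemma lower_wmedian_cdf_between_0_1:
  "0 \<le> lower_wmedian N lam (\<lambda>i. cdf (nus i) x)" "lower_wmedian N lam (\<lambda>i. cdf (nus i) x) \<le> 1"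
  using lower_wmedian_mem[OF lam, of "\<lambda>i. cdf (nus i) x"] nus
  by (auto simp: cdf_between_0_1 real_distribution_if_P1)

lemma cdf_median_measure: "cdf (median_measure N lam nus) x = lower_wmedian N lam (\<lambda>i. cdf (nus i) x)"
  unfolding median_measure_def
  by (subst cdf_distr_galois[OF upper_wmedian_quantile_le_iff lower_wmedian_cdf_between_0_1]) simp_all

lemma quantile_median_measure:
  "0 < t \<Longrightarrow> t < 1 \<Longrightarrow> quantile (median_measure N lam nus) t = upper_wmedian N lam (\<lambda>i. quantile (nus i) t)"
  unfolding median_measure_def
  by (rule quantile_distr_galois[OF upper_wmedian_quantile_le_iff lower_wmedian_cdf_between_0_1])

lemma P1_median_measure: "P1 (median_measure N lam nus)"
proof -
  let ?q = "\<lambda>t. upper_wmedian N lam (\<lambda>i. quantile (nus i) t)"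
  have q: "?q \<in> borel_measurable uniform01"
    by (rule measurable_uniform01_galois[OF upper_wmedian_quantile_le_iff])
  have sum: "integrable uniform01 (\<lambda>t. \<Sum>i<N. \<bar>quantile (nus i) t\<bar>)"
    using nus integrable_quantile by auto
  have bound: "\<bar>?q t\<bar> \<le> (\<Sum>i<N. \<bar>quantile (nus i) t\<bar>)" for t
  proof -
    obtain i where "i < N" "?q t = quantile (nus i) t"
      using upper_wmedian_mem[OF lam, of "\<lambda>i. quantile (nus i) t"] by blast
    then show ?thesis
      using member_le_sum[of i "{..<N}" "\<lambda>i. \<bar>quantile (nus i) t\<bar>"] by simp
  qed
  have "integrable uniform01 (\<lambda>t. \<bar>?q t\<bar>)"
    using bound order_trans[OF abs_ge_zero bound]
    by (intro Bochner_Integration.integrable_bound[OF sum borel_measurable_abs[OF q] AE_I2]) auto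
  then have "integrable (median_measure N lam nus) abs"
    using q by (simp add: median_measure_def integrable_distr_eq)
  moreover have "real_distribution (median_measure N lam nus)"
    unfolding median_measure_def
    by (rule real_distribution_distr_galois
        [OF upper_wmedian_quantile_le_iff lower_wmedian_cdf_between_0_1])
  ultimately show ?thesis
    by (simp add: P1_def real_distribution_def real_distribution_axioms_def)
qed

lemma WMed_iff_cdf_wmedian:
  assumes nu: "P1 nu"
  shows "nu \<in> WMed N lam nus \<longleftrightarrow> (\<forall>x. cdf nu x \<in> wmedian N lam (\<lambda>i. cdf (nus i) x))"
proof -
  have right_cont: "(cdf M \<longlongrightarrow> cdf M x) (at_right x)" if "P1 M" for M x
    using that finite_borel_measure.cdf_is_right_cont[of M x]
    by (simp add: continuous_within real_distribution.finite_borel_measure_M real_distribution_if_P1)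
  have "nu \<in> WMed N lam nus \<longleftrightarrow> (AE x in lborel. cdf nu x \<in> wmedian N lam (\<lambda>i. cdf (nus i) x))"
    using nus nu P1_median_measure
    by (intro WMed_iff_AE_wmedian[OF lam, where phi = cdf and M = lborel
          and rho = "median_measure N lam nus"])
      (simp_all add: integrable_abs_cdf_diff W1_eq_integral_cdf cdf_median_measure
        lower_wmedian_in_wmedian[OF lam])
  also have "\<dots> \<longleftrightarrow> (\<forall>x. cdf nu x \<in> wmedian N lam (\<lambda>i. cdf (nus i) x))"
  proof
    assume ae: "AE x in lborel. cdf nu x \<in> wmedian N lam (\<lambda>i. cdf (nus i) x)"
    show "\<forall>x. cdf nu x \<in> wmedian N lam (\<lambda>i. cdf (nus i) x)"
    proof
      fix x
      have "\<exists>\<^sub>F y in at_right x. cdf nu y \<in> wmedian N lam (\<lambda>i. cdf (nus i) y)"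
        by (rule frequently_at_right_if_AE_lborel[OF ae])
      then show "cdf nu x \<in> wmedian N lam (\<lambda>i. cdf (nus i) x)"
        by (rule wmedian_limit) (use nus nu right_cont in auto)
    qed
  qed simp
  finally show ?thesis .
qed

lemma WMed_iff_quantile_wmedian:
  assumes nu: "P1 nu"
  shows "nu \<in> WMed N lam nus \<longleftrightarrow> (\<forall>t\<in>{0<..<1}. quantile nu t \<in> wmedian N lam (\<lambda>i. quantile (nus i) t))"
proof -
  have "nu \<in> WMed N lam nus
      \<longleftrightarrow> (AE t in uniform01. quantile nu t \<in> wmedian N lam (\<lambda>i. quantile (nus i) t))"
    using nus nu P1_median_measure integrable_quantile
    by (intro WMed_iff_AE_wmedian[OF lam, where phi = quantile and M = uniform01
          and rho = "median_measure N lam nus"])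
      (auto simp: W1_eq_integral_quantile quantile_median_measure upper_wmedian_in_wmedian[OF lam])
  also have "\<dots> \<longleftrightarrow> (\<forall>t\<in>{0<..<1}. quantile nu t \<in> wmedian N lam (\<lambda>i. quantile (nus i) t))"
  proof
    assume ae: "AE t in uniform01. quantile nu t \<in> wmedian N lam (\<lambda>i. quantile (nus i) t)"
    show "\<forall>t\<in>{0<..<1}. quantile nu t \<in> wmedian N lam (\<lambda>i. quantile (nus i) t)"
    proof
      fix t :: real assume "t \<in> {0<..<1}"
      then have t: "0 < t" "t < 1" by auto
      have "\<exists>\<^sub>F s in at_left t. quantile nu s \<in> wmedian N lam (\<lambda>i. quantile (nus i) s)"
        by (rule frequently_at_left_if_AE_uniform01[OF ae t])
      then show "quantile nu t \<in> wmedian N lam (\<lambda>i. quantile (nus i) t)"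
        by (rule wmedian_limit)
          (use nus nu t in \<open>auto intro: quantile_left_continuous real_distribution_if_P1\<close>)
    qed
  next
    assume "\<forall>t\<in>{0<..<1}. quantile nu t \<in> wmedian N lam (\<lambda>i. quantile (nus i) t)"
    then show "AE t in uniform01. quantile nu t \<in> wmedian N lam (\<lambda>i. quantile (nus i) t)"
      by (intro AE_I2) simp
  qed
  finally show ?thesis .
qed

lemma WMed_unique:
  assumes no_half: "\<not> (\<exists>I\<subseteq>{..<N}. (\<Sum>i\<in>I. lam i) = 1/2)"
  shows "\<exists>!mu. mu \<in> WMed N lam nus"
proof (rule ex_ex1I)
  show "\<exists>mu. mu \<in> WMed N lam nus"
    using WMed_iff_cdf_wmedian[OF P1_median_measure]
    by (auto simp: cdf_median_measure lower_wmedian_in_wmedian[OF lam])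
next
  fix mu mu' assume "mu \<in> WMed N lam nus" "mu' \<in> WMed N lam nus"
  moreover from this have "P1 mu" "P1 mu'" by (simp_all add: WMed_def)
  ultimately have "cdf mu x = cdf mu' x" for x
    using wmedian_unique[OF lam no_half, of "cdf mu x" "\<lambda>i. cdf (nus i) x" "cdf mu' x"]
    by (simp add: WMed_iff_cdf_wmedian)
  with \<open>P1 mu\<close> \<open>P1 mu'\<close> show "mu = mu'"
    by (intro cdf_unique ext) (simp_all add: real_distribution_if_P1)
qed

end

theorem proposition4p1:
  fixes N :: nat and lam :: "nat \<Rightarrow> real" and nus :: "nat \<Rightarrow> real measure" and nu :: "real measure"
  assumes "unit_simplex N lam"
    and "\<forall>i<N. P1 (nus i)"
    and "P1 nu"
  shows "(nu \<in> WMed N lam nus \<longleftrightarrow> (\<forall>x. cdf nu x \<in> wmedian N lam (\<lambda>i. cdf (nus i) x)))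
       \<and> (nu \<in> WMed N lam nus \<longleftrightarrow>
            (\<forall>t\<in>{0<..<1}. quantile nu t \<in> wmedian N lam (\<lambda>i. quantile (nus i) t)))
       \<and> ((\<not> (\<exists>I\<subseteq>{..<N}. (\<Sum>i\<in>I. lam i) = 1/2)) \<longrightarrow> (\<exists>!mu. mu \<in> WMed N lam nus))"
  using WMed_iff_cdf_wmedian[OF assms] WMed_iff_quantile_wmedian[OF assms] WMed_unique[OF assms(1,2)]
  by blast

end
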